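(* Let $D$ be an integral domain with quotient field $K$, let $T$ be a flat overring of $D$, and let $f\in K[X]$. Then: (a) $f\in\mathrm{Int}(D)T$ if and only if $(D:_Df(D))T=T$; (b) $f\in\mathrm{Int}(T)$ if and only if $(T:_Tf(D)T)=T$.
   Context: A flat overring of $D$ is a ring $T$ with $D\subseteq T\subseteq K$ that is flat as a $D$-module. $\mathrm{Int}(A)=\{g\in K[X]\mid g(A)\subseteq A\}$. $\mathrm{Int}(D)T$ is the subring of $K[X]$ of finite sums $\sum f_it_i$ ($f_i\in\mathrm{Int}(D)$, $t_i\in T$). $(D:_Df(D))=\{d\in D\mid d\,f(D)\subseteq D\}$; $f(D)T$ is the $T$-submodule of $K$ generated by $f(D)$; $(T:_Tf(D)T)=\{t\in T\mid t\,f(D)T\subseteq T\}$. *)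

theory Defs
  imports "HOL-Computational_Algebra.Polynomial"
begin

text \<open>The quotient field K is modelled as an ambient type 'k of class field;
  subrings of K are subsets of this type.\<close>

definition subring :: "'k::field set \<Rightarrow> bool" where
  "subring S \<longleftrightarrow> 0 \<in> S \<and> 1 \<in> S \<and>
     (\<forall>x\<in>S. \<forall>y\<in>S. x + y \<in> S \<and> x - y \<in> S \<and> x * y \<in> S)"

definition domain_with_quotient_field :: "'k::field set \<Rightarrow> bool" where
  "domain_with_quotient_field D \<longleftrightarrow> subring D \<and>
     (\<forall>x. \<exists>a\<in>D. \<exists>b\<in>D. b \<noteq> 0 \<and> x = a / b)"

definition overring :: "'k::field set \<Rightarrow> 'k set \<Rightarrow> bool" where
  "overring D T \<longleftrightarrow> subring T \<and> D \<subseteq> T"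

text \<open>Flatness of T as a D-module, via the equational criterion of flatness
  (every D-linear relation among elements of T is trivial).\<close>
definition flat_over :: "'k::field set \<Rightarrow> 'k set \<Rightarrow> bool" where
  "flat_over D T \<longleftrightarrow>
     (\<forall>(n::nat) a t. (\<forall>i<n. a i \<in> D \<and> t i \<in> T) \<and> (\<Sum>i<n. a i * t i) = 0 \<longrightarrow>
        (\<exists>(m::nat) b s. (\<forall>j<m. s j \<in> T) \<and> (\<forall>i<n. \<forall>j<m. b i j \<in> D) \<and>
                 (\<forall>i<n. t i = (\<Sum>j<m. b i j * s j)) \<and>
                 (\<forall>j<m. (\<Sum>i<n. a i * b i j) = 0)))"

definition flat_overring :: "'k::field set \<Rightarrow> 'k set \<Rightarrow> bool" where
  "flat_overring D T \<longleftrightarrow> overring D T \<and> flat_over D T"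

definition IntPoly :: "'k::field set \<Rightarrow> 'k poly set" where
  "IntPoly A = {g. \<forall>a\<in>A. poly g a \<in> A}"

definition IntPoly_times :: "'k::field set \<Rightarrow> 'k set \<Rightarrow> 'k poly set" where
  "IntPoly_times D T = {(\<Sum>i<(n::nat). smult (t i) (f i)) | n f t.
       (\<forall>i<n. f i \<in> IntPoly D \<and> t i \<in> T)}"

text \<open>A S: the S-submodule of K generated by A (finite sums of s_i a_i).\<close>
definition gen_mod :: "'k::field set \<Rightarrow> 'k set \<Rightarrow> 'k set" where
  "gen_mod A S = {(\<Sum>i<(n::nat). s i * x i) | n s x. (\<forall>i<n. s i \<in> S \<and> x i \<in> A)}"

definition colon :: "'k::field set \<Rightarrow> 'k set \<Rightarrow> 'k set" where
  "colon R M = {r \<in> R. \<forall>x\<in>M. r * x \<in> R}"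

end

theory Submission
  imports Defs
begin

text \<open>The basic consequence of flatness is \<open>(D :\<^sub>D t)T = T\<close> for every \<open>t \<in> T\<close>: writing
  \<open>t = a/b\<close>, the relation \<open>a\<cdot>1 + (-b)\<cdot>t = 0\<close> in \<open>T\<close> factors through \<open>D\<close>, which produces
  \<open>1 = \<Sum> c\<^sub>j s\<^sub>j\<close> with \<open>s\<^sub>j \<in> T\<close> and \<open>c\<^sub>j t \<in> D\<close>.
  (a) If \<open>f = \<Sum> t\<^sub>i g\<^sub>i\<close> with \<open>g\<^sub>i \<in> Int(D)\<close>, the ideal \<open>\<Inter> (D :\<^sub>D t\<^sub>i)\<close> still extends to \<open>T\<close>
  and multiplies \<open>f(D)\<close> into \<open>D\<close>. Conversely, \<open>1 = \<Sum> s\<^sub>i c\<^sub>i\<close> with \<open>c\<^sub>i f(D) \<subseteq> D\<close> gives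
  \<open>f = \<Sum> s\<^sub>i (c\<^sub>i f)\<close>.
  (b) Both sides amount to \<open>f(D) \<subseteq> T\<close>, which forces \<open>f(T) \<subseteq> T\<close> by induction on
  \<open>N = deg f\<close>: for \<open>x \<in> T\<close> and \<open>c \<in> (D :\<^sub>D x)\<close> the polynomial \<open>f(cX) - c\<^sup>N f\<close> has lower
  degree and maps \<open>D\<close> into \<open>T\<close>, whence \<open>c\<^sup>N f(x) \<in> T\<close>; since the \<open>N\<close>-th powers of
  \<open>(D :\<^sub>D x)\<close> still generate the unit ideal of \<open>T\<close>, \<open>f(x) \<in> T\<close>.\<close>

lemma subring_0: "subring S \<Longrightarrow> 0 \<in> S"
  and subring_1: "subring S \<Longrightarrow> 1 \<in> S"
  and subring_add: "subring S \<Longrightarrow> x \<in> S \<Longrightarrow> y \<in> S \<Longrightarrow> x + y \<in> S"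
  and subring_diff: "subring S \<Longrightarrow> x \<in> S \<Longrightarrow> y \<in> S \<Longrightarrow> x - y \<in> S"
  and subring_mult: "subring S \<Longrightarrow> x \<in> S \<Longrightarrow> y \<in> S \<Longrightarrow> x * y \<in> S"
  unfolding subring_def by auto

lemma subring_uminus: "subring S \<Longrightarrow> x \<in> S \<Longrightarrow> - x \<in> S"
  by (metis diff_0 subring_0 subring_diff)

lemma subring_power: "subring S \<Longrightarrow> x \<in> S \<Longrightarrow> x ^ n \<in> S"
  by (induction n) (auto intro: subring_1 subring_mult)

lemma subring_of_nat: "subring S \<Longrightarrow> of_nat n \<in> S"
  by (induction n) (auto intro: subring_0 subring_1 subring_add)

lemma subring_sum: "subring S \<Longrightarrow> (\<And>i. i \<in> F \<Longrightarrow> g i \<in> S) \<Longrightarrow> sum g F \<in> S"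
  by (induction F rule: infinite_finite_induct) (auto intro: subring_0 subring_add)

lemma gen_mod_0: "0 \<in> gen_mod A S"
  unfolding gen_mod_def by (rule CollectI, rule exI[of _ 0]) auto

lemma gen_mod_add_term:
  assumes "s \<in> S" "a \<in> A" "w \<in> gen_mod A S"
  shows "s * a + w \<in> gen_mod A S"
proof -
  obtain n :: nat and ss x where w: "w = (\<Sum>i<n. ss i * x i)" "\<forall>i<n. ss i \<in> S \<and> x i \<in> A"
    using assms(3) unfolding gen_mod_def by blast
  have "s * a + w = (\<Sum>i<Suc n. (ss(n := s)) i * (x(n := a)) i)"
    using w(1) by (simp add: add.commute)
  moreover have "\<forall>i<Suc n. (ss(n := s)) i \<in> S \<and> (x(n := a)) i \<in> A"
    using w(2) assms by (auto simp: less_Suc_eq)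
  ultimately show ?thesis unfolding gen_mod_def by blast
qed

lemma gen_mod_induct [consumes 1, case_names zero add_term]:
  assumes "y \<in> gen_mod A S" "P 0"
    and "\<And>s a z. s \<in> S \<Longrightarrow> a \<in> A \<Longrightarrow> z \<in> gen_mod A S \<Longrightarrow> P z \<Longrightarrow> P (s * a + z)"
  shows "P y"
proof -
  obtain n :: nat and ss x where y: "y = (\<Sum>i<n. ss i * x i)" "\<forall>i<n. ss i \<in> S \<and> x i \<in> A"
    using assms(1) unfolding gen_mod_def by blast
  have "(\<Sum>i<m. ss i * x i) \<in> gen_mod A S \<and> P (\<Sum>i<m. ss i * x i)" if "m \<le> n" for m
    using that
  proof (induction m)
    case 0
    then show ?case using assms(2) gen_mod_0 by simp
  next
    case (Suc m)
    have "(\<Sum>i<Suc m. ss i * x i) = ss m * x m + (\<Sum>i<m. ss i * x i)"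
      by (simp add: add.commute)
    moreover have "ss m * x m + (\<Sum>i<m. ss i * x i) \<in> gen_mod A S
        \<and> P (ss m * x m + (\<Sum>i<m. ss i * x i))"
      using Suc assms(3)[of "ss m" "x m"] gen_mod_add_term[of "ss m" S "x m" A] y(2) by simp
    ultimately show ?case by (simp only:)
  qed
  then show ?thesis using y(1) by blast
qed

lemma gen_mod_add: "x \<in> gen_mod A S \<Longrightarrow> y \<in> gen_mod A S \<Longrightarrow> x + y \<in> gen_mod A S"
  by (induction x rule: gen_mod_induct) (auto simp: add.assoc intro: gen_mod_add_term)

lemma gen_mod_single: "s \<in> S \<Longrightarrow> a \<in> A \<Longrightarrow> s * a \<in> gen_mod A S"
  using gen_mod_add_term[OF _ _ gen_mod_0] by force

lemma gen_mod_sum: "(\<And>i. i \<in> F \<Longrightarrow> g i \<in> gen_mod A S) \<Longrightarrow> sum g F \<in> gen_mod A S"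
  by (induction F rule: infinite_finite_induct) (auto intro: gen_mod_0 gen_mod_add)

lemma gen_mod_mono: "y \<in> gen_mod A S \<Longrightarrow> A \<subseteq> B \<Longrightarrow> y \<in> gen_mod B S"
  by (induction y rule: gen_mod_induct) (auto intro: gen_mod_0 gen_mod_add_term)

lemma gen_mod_mult_gen_mod:
  assumes "subring S" "x \<in> gen_mod A S" "y \<in> gen_mod B S"
    and "\<And>a b. a \<in> A \<Longrightarrow> b \<in> B \<Longrightarrow> a * b \<in> C"
  shows "x * y \<in> gen_mod C S"
  using assms(2,3)
proof (induction x arbitrary: y rule: gen_mod_induct)
  case zero
  then show ?case by (simp add: gen_mod_0)
next
  case (add_term s a z)
  have "s * a * y \<in> gen_mod C S" using add_term.prems
  proof (induction y rule: gen_mod_induct)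
    case zero
    then show ?case by (simp add: gen_mod_0)
  next
    case (add_term r b w)
    have "s * a * (r * b + w) = (s * r) * (a * b) + s * a * w"
      by (simp add: algebra_simps)
    then show ?case
      using add_term gen_mod_add_term assms(4) subring_mult[OF assms(1)] \<open>s \<in> S\<close> \<open>a \<in> A\<close>
      by metis
  qed
  then show ?case using add_term.IH[OF add_term.prems] gen_mod_add by (simp add: distrib_right)
qed

lemma gen_mod_mult:
  assumes "subring S" "r \<in> S" "y \<in> gen_mod A S"
  shows "r * y \<in> gen_mod A S"
  using gen_mod_mult_gen_mod[OF assms(1) gen_mod_single[OF assms(2), of 1 "{1}"] assms(3), of A]
  by simp

lemma gen_mod_mult_mem:
  assumes "subring S" "\<And>a. a \<in> A \<Longrightarrow> a * y \<in> S" "z \<in> gen_mod A S"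
  shows "z * y \<in> S"
  using assms(3)
proof (induction z rule: gen_mod_induct)
  case zero
  then show ?case using subring_0[OF assms(1)] by simp
next
  case (add_term s a z)
  have "(s * a + z) * y = s * (a * y) + z * y" by (simp add: algebra_simps)
  then show ?case using add_term assms(2) subring_add[OF assms(1)] subring_mult[OF assms(1)] by simp
qed

lemma gen_mod_subset: "subring S \<Longrightarrow> A \<subseteq> S \<Longrightarrow> gen_mod A S \<subseteq> S"
  using gen_mod_mult_mem[of S A 1] by (simp add: subset_iff)

lemma gen_mod_subset_iff:
  assumes "subring S"
  shows "gen_mod A S \<subseteq> S \<longleftrightarrow> A \<subseteq> S"
proof
  assume "gen_mod A S \<subseteq> S"
  then show "A \<subseteq> S" using gen_mod_single[OF subring_1[OF assms], of _ A] by auto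
qed (use gen_mod_subset[OF assms] in simp)

lemma gen_mod_eq_iff_one:
  assumes "subring S" "A \<subseteq> S"
  shows "gen_mod A S = S \<longleftrightarrow> 1 \<in> gen_mod A S"
proof
  assume "1 \<in> gen_mod A S"
  then have "S \<subseteq> gen_mod A S" using gen_mod_mult[OF assms(1), of _ 1] by force
  then show "gen_mod A S = S" using gen_mod_subset[OF assms] by blast
qed (use subring_1[OF assms(1)] in simp)

lemma gen_mod_power_add:
  assumes S: "subring S" and "a \<in> S" "b \<in> S" "a ^ i \<in> gen_mod A S" "b ^ k \<in> gen_mod A S"
  shows "(a + b) ^ (i + k) \<in> gen_mod A S"
proof -
  have coeff: "of_nat n * a ^ p * b ^ q \<in> S" for n p q
    using assms(2,3) by (intro subring_mult[OF S] subring_of_nat[OF S] subring_power[OF S])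
  have binomial_term: "of_nat ((i + k) choose j) * a ^ j * b ^ (i + k - j) \<in> gen_mod A S" for j
  proof (cases "i \<le> j")
    case True
    then have "of_nat ((i + k) choose j) * a ^ j * b ^ (i + k - j)
        = (of_nat ((i + k) choose j) * a ^ (j - i) * b ^ (i + k - j)) * a ^ i"
      by (simp add: power_add[symmetric] algebra_simps)
    moreover have "\<dots> \<in> gen_mod A S"
      by (rule gen_mod_mult[OF S coeff assms(4)])
    ultimately show ?thesis by (simp only:)
  next
    case False
    then have "of_nat ((i + k) choose j) * a ^ j * b ^ (i + k - j)
        = (of_nat ((i + k) choose j) * a ^ j * b ^ (i - j)) * b ^ k"
      by (simp add: power_add[symmetric] algebra_simps)
    moreover have "\<dots> \<in> gen_mod A S"
      by (rule gen_mod_mult[OF S coeff assms(5)])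
    ultimately show ?thesis by (simp only:)
  qed
  show ?thesis unfolding binomial_ring by (rule gen_mod_sum[OF binomial_term])
qed

lemma one_in_gen_mod_powers:
  assumes S: "subring S" and "A \<subseteq> S" "1 \<in> gen_mod A S"
  shows "1 \<in> gen_mod ((\<lambda>a. a ^ N) ` A) S"
proof -
  let ?L = "(\<lambda>a. a ^ N) ` A"
  have "\<exists>k. y ^ k \<in> gen_mod ?L S" if "y \<in> gen_mod A S" for y
    using that
  proof (induction y rule: gen_mod_induct)
    case zero
    have "0 ^ 1 \<in> gen_mod ?L S" using gen_mod_0 by simp
    then show ?case by blast
  next
    case (add_term s a z)
    then obtain k where k: "z ^ k \<in> gen_mod ?L S" by blast
    have "a ^ N \<in> ?L" using add_term(2) by (rule imageI)
    then have "s ^ N * a ^ N \<in> gen_mod ?L S"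
      by (rule gen_mod_single[OF subring_power[OF S add_term(1)]])
    then have "(s * a) ^ N \<in> gen_mod ?L S" by (simp add: power_mult_distrib)
    moreover have "s * a \<in> S"
      using add_term(1,2) assms(2) by (blast intro: subring_mult[OF S])
    moreover have "z \<in> S" using add_term(3) gen_mod_subset[OF S assms(2)] by blast
    ultimately have "(s * a + z) ^ (N + k) \<in> gen_mod ?L S"
      using gen_mod_power_add[OF S _ _ _ k] by blast
    then show ?case by blast
  qed
  from this[OF assms(3)] show ?thesis by simp
qed

lemma colon_eq_iff:
  assumes "subring T"
  shows "colon T M = T \<longleftrightarrow> M \<subseteq> T"
proof
  assume "colon T M = T"
  then have "1 \<in> colon T M" using subring_1[OF assms] by simp
  then show "M \<subseteq> T" unfolding colon_def by auto
next
  assume "M \<subseteq> T"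
  then show "colon T M = T" using subring_mult[OF assms] unfolding colon_def by auto
qed

lemma flat_overring_one_in_gen_mod_colon:
  assumes D: "domain_with_quotient_field D" and T: "flat_overring D T" and "t \<in> T"
  shows "1 \<in> gen_mod (colon D {t}) T"
proof -
  have sD: "subring D" and sT: "subring T"
    using assms unfolding domain_with_quotient_field_def flat_overring_def overring_def by auto
  obtain a b where ab: "a \<in> D" "b \<in> D" "b \<noteq> 0" "t = a / b"
    using D unfolding domain_with_quotient_field_def by blast
  define as where "as = (\<lambda>i::nat. if i = 0 then a else - b)"
  define ts where "ts = (\<lambda>i::nat. if i = 0 then 1 else t)"
  have "\<forall>i<2. as i \<in> D \<and> ts i \<in> T"
    using ab subring_uminus[OF sD] subring_1[OF sT] \<open>t \<in> T\<close>
    by (auto simp: as_def ts_def less_2_cases_iff)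
  moreover have "(\<Sum>i<2. as i * ts i) = 0"
    using ab by (simp add: as_def ts_def eval_nat_numeral)
  ultimately obtain m :: nat and c s where
    cs: "\<forall>j<m. s j \<in> T" "\<forall>i<2. \<forall>j<m. c i j \<in> D"
      "\<forall>i<2. ts i = (\<Sum>j<m. c i j * s j)" "\<forall>j<m. (\<Sum>i<2. as i * c i j) = 0"
    using T unfolding flat_overring_def flat_over_def by blast
  have one: "1 = (\<Sum>j<m. s j * c 0 j)"
    using cs(3)[rule_format, of 0] by (simp add: ts_def mult.commute)
  have "c 0 j * t = c 1 j" if "j < m" for j
  proof -
    have "a * c 0 j = b * c 1 j"
      using cs(4) that by (simp add: as_def eval_nat_numeral)
    then have "b * (c 0 j * t) = b * c 1 j"
      using ab by (simp add: mult_ac)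
    then show ?thesis using ab(3) by simp
  qed
  then have "\<forall>j<m. s j \<in> T \<and> c 0 j \<in> colon D {t}"
    using cs(1,2) unfolding colon_def by auto
  then show ?thesis unfolding gen_mod_def using one by blast
qed

lemma one_in_gen_mod_colon_finite:
  assumes sD: "subring D" and sT: "subring T"
    and unit: "\<And>t. t \<in> T \<Longrightarrow> 1 \<in> gen_mod (colon D {t}) T"
    and "finite F" "F \<subseteq> T"
  shows "1 \<in> gen_mod (colon D F) T"
  using assms(4,5)
proof (induction F rule: finite_induct)
  case empty
  then show ?case using gen_mod_single[OF subring_1[OF sT], of 1 "colon D {}"] subring_1[OF sD]
    by (simp add: colon_def)
next
  case (insert t F)
  have "1 * 1 \<in> gen_mod (colon D (insert t F)) T"
  proof (rule gen_mod_mult_gen_mod[OF sT])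
    show "1 \<in> gen_mod (colon D F) T" "1 \<in> gen_mod (colon D {t}) T"
      using insert unit by auto
  next
    fix x y assume "x \<in> colon D F" "y \<in> colon D {t}"
    then show "x * y \<in> colon D (insert t F)"
      unfolding colon_def using subring_mult[OF sD]
      by (auto simp: mult.assoc) (metis mult.left_commute)
  qed
  then show ?case by simp
qed

lemma degree_pcompose_scale_diff_less:
  fixes f :: "'a::comm_ring_1 poly"
  assumes "degree f > 0"
  shows "degree (pcompose f [:0, c:] - smult (c ^ degree f) f) < degree f"
proof (rule degree_lessI)
  show "\<forall>k\<ge>degree f. coeff (pcompose f [:0, c:] - smult (c ^ degree f) f) k = 0"
    by (auto simp: coeff_pcompose_linear coeff_eq_0 le_less)
qed (use assms in simp)

lemma poly_mem_if_image_subset: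
  assumes sD: "subring D" and sT: "subring T" and "D \<subseteq> T"
    and unit: "\<And>t. t \<in> T \<Longrightarrow> 1 \<in> gen_mod (colon D {t}) T"
    and "poly f ` D \<subseteq> T" "x \<in> T"
  shows "poly f x \<in> T"
  using assms(5,6)
proof (induction "degree f" arbitrary: f x rule: less_induct)
  case less
  show ?case
  proof (cases "degree f = 0")
    case True
    then have "poly f x = poly f 0" by (metis degree_0_id poly_pCons poly_0 mult_zero_right add_0_right)
    then show ?thesis using less.prems(1) subring_0[OF sD] by auto
  next
    case False
    define N where "N = degree f"
    have power_times_value: "c ^ N * poly f x \<in> T" if c: "c \<in> colon D {x}" for c
    proof -
      define h where "h = pcompose f [:0, c:] - smult (c ^ N) f"
      have poly_h: "poly h y = poly f (c * y) - c ^ N * poly f y" for y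
        by (simp add: h_def poly_pcompose mult.commute)
      have "c \<in> D" "c * x \<in> D" using c unfolding colon_def by auto
      have "poly h d \<in> T" if "d \<in> D" for d
      proof -
        have "poly f (c * d) \<in> T" "poly f d \<in> T"
          using that \<open>c \<in> D\<close> less.prems(1) subring_mult[OF sD] by auto
        moreover have "c ^ N \<in> T" using \<open>c \<in> D\<close> \<open>D \<subseteq> T\<close> subring_power[OF sT] by auto
        ultimately show ?thesis
          unfolding poly_h by (intro subring_diff[OF sT] subring_mult[OF sT])
      qed
      moreover have "degree h < degree f"
        using False degree_pcompose_scale_diff_less by (simp add: h_def N_def)
      ultimately have "poly h x \<in> T" using less.hyps less.prems(2) by blast
      moreover have "poly f (c * x) \<in> T" using \<open>c * x \<in> D\<close> less.prems(1) by auto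
      ultimately have "poly f (c * x) - poly h x \<in> T" by (intro subring_diff[OF sT])
      then show ?thesis unfolding poly_h by simp
    qed
    have "colon D {x} \<subseteq> T" using \<open>D \<subseteq> T\<close> unfolding colon_def by auto
    then have "1 \<in> gen_mod ((\<lambda>c. c ^ N) ` colon D {x}) T"
      using one_in_gen_mod_powers[OF sT] unit[OF less.prems(2)] by blast
    then have "1 * poly f x \<in> T"
      by (rule gen_mod_mult_mem[OF sT, rotated]) (use power_times_value in auto)
    then show ?thesis by simp
  qed
qed

lemma IntPoly_times_iff_gen_mod_colon:
  assumes sD: "subring D" and sT: "subring T" and "D \<subseteq> T"
    and unit: "\<And>t. t \<in> T \<Longrightarrow> 1 \<in> gen_mod (colon D {t}) T"
  shows "f \<in> IntPoly_times D T \<longleftrightarrow> gen_mod (colon D (poly f ` D)) T = T"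
proof
  assume "f \<in> IntPoly_times D T"
  then obtain n :: nat and g t where f: "f = (\<Sum>i<n. smult (t i) (g i))"
    and gt: "\<forall>i<n. g i \<in> IntPoly D \<and> t i \<in> T"
    unfolding IntPoly_times_def by blast
  have "colon D (t ` {..<n}) \<subseteq> colon D (poly f ` D)"
  proof
    fix d assume d: "d \<in> colon D (t ` {..<n})"
    have "d * poly f a \<in> D" if "a \<in> D" for a
    proof -
      have "d * poly f a = (\<Sum>i<n. (d * t i) * poly (g i) a)"
        by (simp add: f poly_sum sum_distrib_left mult_ac)
      also have "\<dots> \<in> D"
        using d gt that subring_mult[OF sD]
        by (intro subring_sum[OF sD]) (auto simp: colon_def IntPoly_def)
      finally show ?thesis .
    qed
    then show "d \<in> colon D (poly f ` D)" using d unfolding colon_def by auto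
  qed
  moreover have "1 \<in> gen_mod (colon D (t ` {..<n})) T"
    using gt by (intro one_in_gen_mod_colon_finite[OF sD sT unit]) auto
  ultimately have "1 \<in> gen_mod (colon D (poly f ` D)) T"
    by (rule gen_mod_mono[rotated])
  moreover have "colon D (poly f ` D) \<subseteq> T" using \<open>D \<subseteq> T\<close> unfolding colon_def by auto
  ultimately show "gen_mod (colon D (poly f ` D)) T = T"
    using gen_mod_eq_iff_one[OF sT] by blast
next
  assume "gen_mod (colon D (poly f ` D)) T = T"
  then have "1 \<in> gen_mod (colon D (poly f ` D)) T" using subring_1[OF sT] by simp
  then obtain n :: nat and s c where sc: "1 = (\<Sum>i<n. s i * c i)"
    and sc_mem: "\<forall>i<n. s i \<in> T \<and> c i \<in> colon D (poly f ` D)"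
    unfolding gen_mod_def by blast
  have "f = smult (\<Sum>i<n. s i * c i) f" using sc by simp
  also have "\<dots> = (\<Sum>i<n. smult (s i) (smult (c i) f))" by (simp add: smult_sum)
  finally have "f = (\<Sum>i<n. smult (s i) (smult (c i) f))" .
  moreover have "\<forall>i<n. smult (c i) f \<in> IntPoly D \<and> s i \<in> T"
    using sc_mem unfolding IntPoly_def colon_def by auto
  ultimately show "f \<in> IntPoly_times D T"
    unfolding IntPoly_times_def by (intro CollectI exI conjI)
qed

lemma IntPoly_iff_colon_gen_mod:
  assumes sD: "subring D" and sT: "subring T" and "D \<subseteq> T"
    and unit: "\<And>t. t \<in> T \<Longrightarrow> 1 \<in> gen_mod (colon D {t}) T"
  shows "f \<in> IntPoly T \<longleftrightarrow> colon T (gen_mod (poly f ` D) T) = T"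
proof -
  have "f \<in> IntPoly T \<longleftrightarrow> poly f ` D \<subseteq> T"
  proof
    assume "poly f ` D \<subseteq> T"
    then show "f \<in> IntPoly T"
      unfolding IntPoly_def using poly_mem_if_image_subset[OF assms] by simp
  qed (use \<open>D \<subseteq> T\<close> in \<open>auto simp: IntPoly_def\<close>)
  also have "\<dots> \<longleftrightarrow> gen_mod (poly f ` D) T \<subseteq> T"
    by (rule gen_mod_subset_iff[OF sT, symmetric])
  also have "\<dots> \<longleftrightarrow> colon T (gen_mod (poly f ` D) T) = T"
    by (rule colon_eq_iff[OF sT, symmetric])
  finally show ?thesis .
qed

theorem proposition3p4:
  fixes D T :: "'k::field set" and f :: "'k poly"
  assumes "domain_with_quotient_field D"
    and "flat_overring D T"
  shows "(f \<in> IntPoly_times D T \<longleftrightarrow> gen_mod (colon D (poly f ` D)) T = T)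
       \<and> (f \<in> IntPoly T \<longleftrightarrow> colon T (gen_mod (poly f ` D) T) = T)"
proof -
  have sD: "subring D" and sT: "subring T" and "D \<subseteq> T"
    using assms unfolding domain_with_quotient_field_def flat_overring_def overring_def by auto
  have unit: "\<And>t. t \<in> T \<Longrightarrow> 1 \<in> gen_mod (colon D {t}) T"
    using flat_overring_one_in_gen_mod_colon[OF assms] .
  show ?thesis
    using IntPoly_times_iff_gen_mod_colon[OF sD sT \<open>D \<subseteq> T\<close> unit]
      IntPoly_iff_colon_gen_mod[OF sD sT \<open>D \<subseteq> T\<close> unit] by (rule conjI)
qed

end
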